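(* Let $a,b$ be rational numbers with $a+b\in\mathbb{Z}$, and let $n$ be a nonnegative integer with $n\ge -(a+b)$. Then, as $z\to\infty$, $$\left(\frac{z-1}{2}\right)^a\left(\frac{z+1}{2}\right)^b J_n(a,b,z)-J_{n+a+b}(-a,-b,z)=O\big(z^{-(n+1)}\big),$$ i.e. the Laurent expansion at $\infty$ of the left-hand side contains only powers $z^j$ with $j\le -(n+1)$.
   Context: For a nonnegative integer $N$ and complex parameters $\alpha,\beta$, the (generalized) Jacobi polynomial is $$J_N(\alpha,\beta,x)=\sum_{j=0}^{N}\binom{N+\alpha+\beta+j}{j}\binom{N+\alpha}{N-j}\left(\frac{x-1}{2}\right)^j,$$ where $\binom{y}{j}=y(y-1)\cdots(y-j+1)/j!$ for arbitrary $y$. For rational $a,b$ with $a+b\in\mathbb Z$, the expression $(z-1)^a(z+1)^b$ denotes the single-valued function on $|z|>1$ given by $z^{a+b}(1-1/z)^a(1+1/z)^b$ (principal binomial series), i.e. the branch whose Laurent expansion at $\infty$ has leading term $z^{a+b}$ with coefficient $1$; and $\left(\frac{z-1}{2}\right)^a\left(\frac{z+1}{2}\right)^b$ means $2^{-(a+b)}(z-1)^a(z+1)^b$. Note $n+a+b$ is a nonnegative integer, so $J_{n+a+b}(-a,-b,z)$ is defined. *)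

theory Defs
  imports "HOL-Analysis.Analysis" "HOL-Library.Landau_Symbols"
begin

definition jacobiJ :: "nat \<Rightarrow> complex \<Rightarrow> complex \<Rightarrow> complex \<Rightarrow> complex" where
  "jacobiJ N \<alpha> \<beta> x =
     (\<Sum>j=0..N. ((of_nat N + \<alpha> + \<beta> + of_nat j) gchoose j)
               * ((of_nat N + \<alpha>) gchoose (N - j)) * ((x - 1) / 2) ^ j)"

text \<open>For rational a, b with a + b an integer, the branch of (z-1)^a (z+1)^b on |z| > 1
  given by z^(a+b) (1-1/z)^a (1+1/z)^b with principal powers (for |z|>1 the arguments
  1 -+ 1/z have positive real part, so principal powr agrees with the binomial series).\<close>
definition branchPow :: "rat \<Rightarrow> rat \<Rightarrow> complex \<Rightarrow> complex" where
  "branchPow a b z = z powi \<lfloor>a + b\<rfloor> * (1 - 1 / z) powr (of_rat a) * (1 + 1 / z) powr (of_rat b)"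

text \<open>((z-1)/2)^a ((z+1)/2)^b := 2^(-(a+b)) (z-1)^a (z+1)^b.\<close>
definition halfBranchPow :: "rat \<Rightarrow> rat \<Rightarrow> complex \<Rightarrow> complex" where
  "halfBranchPow a b z = 2 powi (- \<lfloor>a + b\<rfloor>) * branchPow a b z"

end

(* Write t = (z - 1)/2 and w = 1/t.  The Jacobi polynomial has the symmetric form
   J_n(a,b,z) = t^n sum_j C(n+a, n-j) C(n+b, j) (1+w)^(n-j), and the branch factor equals
   t^(a+b) (1+w)^b.  So with M = n+a+b the left-hand side is t^M F(w), where F(w) is the finite
   combination sum_j C(n+a, n-j) C(n+b, j) (1+w)^(b+n-j) of binomial series minus the polynomial
   t^(-M) J_M(-a,-b,z) in w.  By two Vandermonde convolutions the Taylor coefficient of w^k in F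
   vanishes for k <= M+n: for k <= M both parts contribute C(n+b, k) C(n+M-k, n), and for k > M this
   binomial is zero.  Hence F(w) = O(w^(M+n+1)), and the left-hand side is O(w^(n+1)) = O(z^(-(n+1))). *)

theory Submission
  imports Defs "HOL-Computational_Algebra.Formal_Power_Series"
begin

lemma gbinomial_mult_gbinomial_swap:
  fixes x :: "'a :: field_char_0"
  shows "(x gchoose j) * ((x - of_nat j) gchoose k) = (x gchoose k) * ((x - of_nat k) gchoose j)"
proof -
  have "(x gchoose j) * ((x - of_nat j) gchoose k) = (x gchoose (j + k)) * (of_nat (j + k) gchoose j)"
    using gbinomial_trinomial_revision[of j "j + k" x] by simp
  also have "(of_nat (j + k) gchoose j :: 'a) = of_nat (j + k) gchoose k"
    by (metis add_diff_cancel_left' binomial_gbinomial binomial_symmetric le_add1)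
  also have "(x gchoose (j + k)) * \<dots> = (x gchoose k) * ((x - of_nat k) gchoose j)"
    using gbinomial_trinomial_revision[of k "j + k" x] by simp
  finally show ?thesis .
qed

lemma gbinomial_Vandermonde_atMost:
  fixes a b :: "'a :: field_char_0"
  shows "(\<Sum>k\<le>n. (a gchoose k) * (b gchoose (n - k))) = (a + b) gchoose n"
  using gbinomial_Vandermonde[of a b n] by (simp add: atMost_atLeast0)

definition jacobi_coeff :: "nat \<Rightarrow> 'a \<Rightarrow> 'a \<Rightarrow> nat \<Rightarrow> 'a :: field_char_0" where
  "jacobi_coeff N \<alpha> \<beta> j = ((of_nat N + \<alpha> + \<beta> + of_nat j) gchoose j) * ((of_nat N + \<alpha>) gchoose (N - j))"

definition jacobi_weight :: "nat \<Rightarrow> 'a \<Rightarrow> 'a \<Rightarrow> nat \<Rightarrow> 'a :: field_char_0" where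
  "jacobi_weight n \<alpha> \<beta> j = ((of_nat n + \<alpha>) gchoose (n - j)) * ((of_nat n + \<beta>) gchoose j)"

lemma jacobiJ_eq_sum_coeff:
  "jacobiJ N \<alpha> \<beta> x = (\<Sum>j\<le>N. jacobi_coeff N \<alpha> \<beta> j * ((x - 1) / 2) ^ j)"
  by (simp add: jacobiJ_def jacobi_coeff_def atMost_atLeast0)

lemma jacobi_coeff_eq_sum_weight:
  fixes \<alpha> \<beta> :: "'a :: field_char_0"
  assumes "m \<le> n"
  shows "jacobi_coeff n \<alpha> \<beta> m = (\<Sum>j\<le>m. jacobi_weight n \<alpha> \<beta> j * of_nat ((n - j) choose (m - j)))"
proof -
  have summand: "jacobi_weight n \<alpha> \<beta> j * of_nat ((n - j) choose (m - j))
      = ((of_nat n + \<alpha>) gchoose (n - m)) * (((of_nat n + \<beta>) gchoose j) * ((\<alpha> + of_nat m) gchoose (m - j)))"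
    if j: "j \<le> m" for j
  proof -
    have "(n - j) choose (m - j) = (n - j) choose (n - j - (m - j))"
      using j assms by (intro binomial_symmetric) simp
    also have "n - j - (m - j) = n - m" using j assms by simp
    finally have "of_nat ((n - j) choose (m - j)) = (of_nat (n - j) gchoose (n - m) :: 'a)"
      by (simp add: binomial_gbinomial)
    moreover have "((of_nat n + \<alpha>) gchoose (n - j)) * (of_nat (n - j) gchoose (n - m))
        = ((of_nat n + \<alpha>) gchoose (n - m)) * ((of_nat n + \<alpha> - of_nat (n - m)) gchoose (n - j - (n - m)))"
      using gbinomial_trinomial_revision[of "n - m" "n - j" "of_nat n + \<alpha>"] j assms by simp
    moreover have "of_nat n + \<alpha> - of_nat (n - m) = \<alpha> + (of_nat m :: 'a)"
      using assms by (simp add: of_nat_diff)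
    moreover have "n - j - (n - m) = m - j" using j assms by simp
    ultimately show ?thesis by (simp add: jacobi_weight_def algebra_simps)
  qed
  have "(\<Sum>j\<le>m. jacobi_weight n \<alpha> \<beta> j * of_nat ((n - j) choose (m - j)))
     = ((of_nat n + \<alpha>) gchoose (n - m)) * (\<Sum>j\<le>m. ((of_nat n + \<beta>) gchoose j) * ((\<alpha> + of_nat m) gchoose (m - j)))"
    unfolding sum_distrib_left by (intro sum.cong refl) (rule summand, simp)
  also have "\<dots> = ((of_nat n + \<alpha>) gchoose (n - m)) * ((of_nat n + \<alpha> + \<beta> + of_nat m) gchoose m)"
    by (subst gbinomial_Vandermonde_atMost) (simp add: algebra_simps)
  finally show ?thesis by (simp add: jacobi_coeff_def mult.commute)
qed

lemma jacobiJ_eq_sum_weight: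
  "jacobiJ n \<alpha> \<beta> x = (\<Sum>j\<le>n. jacobi_weight n \<alpha> \<beta> j * ((x - 1) / 2) ^ j * ((x + 1) / 2) ^ (n - j))"
proof -
  \<comment> \<open>Expand \<open>((x + 1) / 2) ^ (n - j) = (1 + t) ^ (n - j)\<close> binomially and exchange the two sums.\<close>
  define t where "t = (x - 1) / 2"
  have x1: "(x + 1) / 2 = 1 + t" by (simp add: t_def field_simps)
  define F where
    "F j m = (if j \<le> m then jacobi_weight n \<alpha> \<beta> j * of_nat ((n - j) choose (m - j)) * t ^ m else 0)"
    for j m
  have row: "jacobi_weight n \<alpha> \<beta> j * t ^ j * (1 + t) ^ (n - j) = (\<Sum>m\<le>n. F j m)" if j: "j \<le> n" for j
  proof -
    have "(\<Sum>m\<le>n. F j m) = (\<Sum>m\<in>{j..n}. F j m)"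
      by (rule sum.mono_neutral_right) (auto simp: F_def)
    also have "\<dots> = (\<Sum>m\<in>{0+j..(n-j)+j}. F j m)" using j by simp
    also have "\<dots> = (\<Sum>i\<in>{0..n-j}. F j (i + j))" by (rule sum.shift_bounds_cl_nat_ivl)
    also have "\<dots> = (\<Sum>i\<le>n-j. jacobi_weight n \<alpha> \<beta> j * t ^ j * (of_nat ((n - j) choose i) * t ^ i * 1 ^ (n - j - i)))"
      by (intro sum.cong) (auto simp: F_def power_add atMost_atLeast0)
    also have "\<dots> = jacobi_weight n \<alpha> \<beta> j * t ^ j * (t + 1) ^ (n - j)"
      by (simp add: binomial_ring sum_distrib_left)
    finally show ?thesis by (simp add: add.commute)
  qed
  have column: "(\<Sum>j\<le>n. F j m) = jacobi_coeff n \<alpha> \<beta> m * t ^ m" if m: "m \<le> n" for m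
  proof -
    have "(\<Sum>j\<le>n. F j m) = (\<Sum>j\<le>m. F j m)"
      using m by (intro sum.mono_neutral_right) (auto simp: F_def)
    then show ?thesis
      by (simp add: F_def jacobi_coeff_eq_sum_weight[OF m] sum_distrib_right)
  qed
  have "(\<Sum>j\<le>n. jacobi_weight n \<alpha> \<beta> j * t ^ j * (1 + t) ^ (n - j)) = (\<Sum>j\<le>n. \<Sum>m\<le>n. F j m)"
    by (intro sum.cong refl) (simp add: row)
  also have "\<dots> = (\<Sum>m\<le>n. \<Sum>j\<le>n. F j m)" by (rule sum.swap)
  also have "\<dots> = jacobiJ n \<alpha> \<beta> x"
    by (simp add: column jacobiJ_eq_sum_coeff t_def)
  finally show ?thesis by (simp add: x1 t_def)
qed

lemma sum_jacobi_weight_mult_gbinomial: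
  fixes \<alpha> \<beta> :: "'a :: field_char_0"
  shows "(\<Sum>j\<le>n. jacobi_weight n \<alpha> \<beta> j * ((\<beta> + of_nat (n - j)) gchoose k))
     = ((of_nat n + \<beta>) gchoose k) * ((of_nat n + of_nat n + \<alpha> + \<beta> - of_nat k) gchoose n)"
proof -
  have summand: "jacobi_weight n \<alpha> \<beta> j * ((\<beta> + of_nat (n - j)) gchoose k)
     = ((of_nat n + \<beta>) gchoose k) * (((of_nat n + \<beta> - of_nat k) gchoose j) * ((of_nat n + \<alpha>) gchoose (n - j)))"
    if "j \<le> n" for j
  proof -
    have shift: "\<beta> + of_nat (n - j) = of_nat n + \<beta> - of_nat j"
      using that by (simp add: of_nat_diff)
    have "jacobi_weight n \<alpha> \<beta> j * ((\<beta> + of_nat (n - j)) gchoose k)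
        = ((of_nat n + \<alpha>) gchoose (n - j)) * (((of_nat n + \<beta>) gchoose j) * ((of_nat n + \<beta> - of_nat j) gchoose k))"
      by (simp only: jacobi_weight_def shift mult.assoc)
    also have "\<dots> = ((of_nat n + \<alpha>) gchoose (n - j)) * (((of_nat n + \<beta>) gchoose k) * ((of_nat n + \<beta> - of_nat k) gchoose j))"
      by (subst gbinomial_mult_gbinomial_swap) (rule refl)
    finally show ?thesis by (simp only: mult_ac)
  qed
  have "(\<Sum>j\<le>n. jacobi_weight n \<alpha> \<beta> j * ((\<beta> + of_nat (n - j)) gchoose k))
     = ((of_nat n + \<beta>) gchoose k) * (\<Sum>j\<le>n. ((of_nat n + \<beta> - of_nat k) gchoose j) * ((of_nat n + \<alpha>) gchoose (n - j)))"
    unfolding sum_distrib_left by (intro sum.cong refl) (rule summand, simp)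
  also have "(\<Sum>j\<le>n. ((of_nat n + \<beta> - of_nat k) gchoose j) * ((of_nat n + \<alpha>) gchoose (n - j)))
      = (of_nat n + of_nat n + \<alpha> + \<beta> - of_nat k) gchoose n"
    by (subst gbinomial_Vandermonde_atMost) (simp add: algebra_simps)
  finally show ?thesis .
qed

lemma sums_bigo_at_0_power:
  fixes c :: "nat \<Rightarrow> 'a :: {real_normed_field, banach}"
  assumes r: "r > 0"
    and sums: "\<And>w. norm w < r \<Longrightarrow> (\<lambda>k. c k * w ^ k) sums f w"
    and zero: "\<And>k. k < N \<Longrightarrow> c k = 0"
  shows "f \<in> O[at 0](\<lambda>w. w ^ N)"
proof -
  define K :: 'a where "K = of_real (r / 2)"
  have K: "norm K < r" "K \<noteq> 0" using r by (auto simp: K_def)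
  have "summable (\<lambda>k. c (k + N) * K ^ (k + N))"
    using sums_summable[OF sums[OF K(1)]] by (rule summable_ignore_initial_segment)
  then have "summable (\<lambda>k. K ^ N * (c (k + N) * K ^ k))"
    by (simp add: power_add mult_ac)
  then have summable_K: "summable (\<lambda>k. c (k + N) * K ^ k)"
    using K(2) by simp
  define g where "g w = (\<Sum>k. c (k + N) * w ^ k)" for w
  have "isCont g 0"
    unfolding g_def by (rule isCont_powser[OF summable_K]) (use K in simp)
  then have g_bounded: "g \<in> O[at 0](\<lambda>_. 1)"
    by (intro bigoI_tendsto[where c = "g 0"]) (simp_all add: isCont_def)
  have factor: "f w = w ^ N * g w" if w: "norm w < norm K" for w
  proof -
    have "(\<lambda>k. c (k + N) * w ^ (k + N)) sums (f w - (\<Sum>i<N. c i * w ^ i))"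
      using w K by (intro sums_split_initial_segment sums) simp
    then have "(\<lambda>k. w ^ N * (c (k + N) * w ^ k)) sums f w"
      by (simp add: zero power_add mult_ac)
    moreover have "(\<lambda>k. w ^ N * (c (k + N) * w ^ k)) sums (w ^ N * g w)"
      unfolding g_def by (intro sums_mult summable_sums powser_inside[OF summable_K w])
    ultimately show ?thesis by (rule sums_unique2)
  qed
  have "eventually (\<lambda>w. norm w < norm K) (at (0 :: 'a))"
    using K(2) by (intro order_tendstoD(2)[OF tendsto_norm_zero[OF tendsto_ident_at]]) simp
  then have "eventually (\<lambda>w. f w = w ^ N * g w) (at 0)"
    by eventually_elim (rule factor)
  moreover have "(\<lambda>w. w ^ N * g w) \<in> O[at 0](\<lambda>w. w ^ N)"
    by (rule landau_o.big_1_mult[OF landau_o.big_refl g_bounded])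
  ultimately show ?thesis
    by (subst landau_o.big.in_cong)
qed

definition jacobi_defect :: "nat \<Rightarrow> nat \<Rightarrow> complex \<Rightarrow> complex \<Rightarrow> complex \<Rightarrow> complex" where
  "jacobi_defect n M \<alpha> \<beta> w =
     (\<Sum>j\<le>n. jacobi_weight n \<alpha> \<beta> j * (1 + w) powr (\<beta> + of_nat (n - j)))
     - (\<Sum>k\<le>M. jacobi_coeff M (- \<alpha>) (- \<beta>) (M - k) * w ^ k)"

definition jacobi_defect_coeff :: "nat \<Rightarrow> nat \<Rightarrow> complex \<Rightarrow> complex \<Rightarrow> nat \<Rightarrow> complex" where
  "jacobi_defect_coeff n M \<alpha> \<beta> k =
     (\<Sum>j\<le>n. jacobi_weight n \<alpha> \<beta> j * ((\<beta> + of_nat (n - j)) gchoose k))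
     - (if k \<le> M then jacobi_coeff M (- \<alpha>) (- \<beta>) (M - k) else 0)"

lemma jacobi_defect_sums:
  assumes "norm w < 1"
  shows "(\<lambda>k. jacobi_defect_coeff n M \<alpha> \<beta> k * w ^ k) sums jacobi_defect n M \<alpha> \<beta> w"
proof -
  have binomial_series: "(\<lambda>k. \<Sum>j\<le>n. jacobi_weight n \<alpha> \<beta> j * (((\<beta> + of_nat (n - j)) gchoose k) * w ^ k))
      sums (\<Sum>j\<le>n. jacobi_weight n \<alpha> \<beta> j * (1 + w) powr (\<beta> + of_nat (n - j)))"
    by (intro sums_sum sums_mult gen_binomial_complex assms)
  have polynomial: "(\<lambda>k. if k \<in> {..M} then jacobi_coeff M (- \<alpha>) (- \<beta>) (M - k) * w ^ k else 0)
      sums (\<Sum>k\<le>M. jacobi_coeff M (- \<alpha>) (- \<beta>) (M - k) * w ^ k)"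
    by (rule sums_If_finite_set) simp
  from sums_diff[OF binomial_series polynomial] have "(\<lambda>k. (\<Sum>j\<le>n. jacobi_weight n \<alpha> \<beta> j * (((\<beta> + of_nat (n - j)) gchoose k) * w ^ k))
      - (if k \<in> {..M} then jacobi_coeff M (- \<alpha>) (- \<beta>) (M - k) * w ^ k else 0)) sums jacobi_defect n M \<alpha> \<beta> w"
    unfolding jacobi_defect_def .
  moreover have "(\<lambda>k. (\<Sum>j\<le>n. jacobi_weight n \<alpha> \<beta> j * (((\<beta> + of_nat (n - j)) gchoose k) * w ^ k))
      - (if k \<in> {..M} then jacobi_coeff M (- \<alpha>) (- \<beta>) (M - k) * w ^ k else 0))
      = (\<lambda>k. jacobi_defect_coeff n M \<alpha> \<beta> k * w ^ k)"
    by (rule ext) (simp add: jacobi_defect_coeff_def algebra_simps sum_distrib_left)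
  ultimately show ?thesis by simp
qed

lemma jacobi_defect_coeff_eq_0:
  assumes M: "of_nat M = of_nat n + \<alpha> + \<beta>" and k: "k \<le> M + n"
  shows "jacobi_defect_coeff n M \<alpha> \<beta> k = 0"
proof -
  have upper: "of_nat n + of_nat n + \<alpha> + \<beta> - of_nat k = (of_nat (n + M - k) :: complex)"
    using M k by (simp add: of_nat_diff algebra_simps)
  have first: "(\<Sum>j\<le>n. jacobi_weight n \<alpha> \<beta> j * ((\<beta> + of_nat (n - j)) gchoose k))
      = ((of_nat n + \<beta>) gchoose k) * (of_nat (n + M - k) gchoose n)"
    using sum_jacobi_weight_mult_gbinomial[of n \<alpha> \<beta> k] by (simp only: upper)
  show ?thesis
  proof (cases "k \<le> M")
    case True
    have shifted_upper: "of_nat M + - \<alpha> + - \<beta> + of_nat (M - k) = (of_nat (n + M - k) :: complex)"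
      using M True by (simp add: of_nat_diff algebra_simps)
    have lower: "of_nat M + - \<alpha> = of_nat n + \<beta>" using M by (simp add: algebra_simps)
    have index: "M - (M - k) = k" using True by simp
    have "(of_nat (n + M - k) gchoose n :: complex) = of_nat (n + M - k) gchoose (n + M - k - n)"
      using True by (intro gbinomial_of_nat_symmetric) simp
    also have "n + M - k - n = M - k" using True by simp
    finally have symmetric: "(of_nat (n + M - k) gchoose n :: complex) = of_nat (n + M - k) gchoose (M - k)" .
    show ?thesis
      unfolding jacobi_defect_coeff_def first jacobi_coeff_def shifted_upper lower index symmetric
      using True by (simp add: algebra_simps)
  next
    case False
    have "(of_nat (n + M - k) gchoose n :: complex) = of_nat ((n + M - k) choose n)"
      by (simp add: binomial_gbinomial)
    also have "(n + M - k) choose n = 0" using False k by (intro binomial_eq_0) arith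
    finally show ?thesis unfolding jacobi_defect_coeff_def first using False by simp
  qed
qed

lemma jacobi_defect_bigo:
  assumes "of_nat M = of_nat n + \<alpha> + \<beta>"
  shows "jacobi_defect n M \<alpha> \<beta> \<in> O[at 0](\<lambda>w. w ^ (M + n + 1))"
  by (rule sums_bigo_at_0_power[where r = 1 and c = "jacobi_defect_coeff n M \<alpha> \<beta>"])
    (auto intro: jacobi_defect_sums jacobi_defect_coeff_eq_0[OF assms])

lemma powr_mult_Re_pos:
  fixes u v c :: complex
  assumes "0 < Re u" "0 < Re v"
  shows "(u * v) powr c = u powr c * v powr c"
proof -
  have nz: "u \<noteq> 0" "v \<noteq> 0" using assms by auto
  have "\<bar>Im (Ln u)\<bar> < pi / 2" "\<bar>Im (Ln v)\<bar> < pi / 2"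
    using Re_Ln_pos_lt_imp assms by auto
  then have "Ln (u * v) = Ln u + Ln v"
    using nz by (intro Ln_times_simple) (auto simp: abs_less_iff)
  then show ?thesis using nz by (simp add: powr_def distrib_left exp_add)
qed

lemma of_rat_add_eq_of_int_floor:
  fixes a b :: rat
  assumes "a + b \<in> \<int>"
  shows "of_rat a + of_rat b = (of_int \<lfloor>a + b\<rfloor> :: 'a :: field_char_0)"
proof -
  obtain k where k: "a + b = of_int k" using assms by (auto elim: Ints_cases)
  then show ?thesis by (simp flip: of_rat_add)
qed

(* For |z| > 3 both 1 - 1/z and 1 + 2/(z - 1) lie in the right half-plane, where the principal
   power is multiplicative. *)
lemma halfBranchPow_eq:
  fixes a b :: rat and z :: complex
  assumes ab: "a + b \<in> \<int>" and z: "norm z > 3"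
  shows "halfBranchPow a b z = ((z - 1) / 2) powi \<lfloor>a + b\<rfloor> * (1 + 2 / (z - 1)) powr of_rat b"
proof -
  define u where "u = 1 - 1 / z"
  define q where "q = 1 + 2 / (z - 1)"
  have z0: "z \<noteq> 0" and z1: "z - 1 \<noteq> 0" using z by auto
  have "norm (1 / z) < 1" using z by (simp add: norm_divide divide_less_eq)
  then have Re_u: "0 < Re u" using abs_Re_le_cmod[of "1 / z"] by (simp add: u_def)
  then have u0: "u \<noteq> 0" by auto
  have "norm (z - 1) > 2" using norm_triangle_ineq2[of z 1] z by simp
  then have "norm (2 / (z - 1)) < 1" by (simp add: norm_divide divide_less_eq)
  then have Re_q: "0 < Re q" using abs_Re_le_cmod[of "2 / (z - 1)"] by (simp add: q_def)
  have "1 + 1 / z = u * q" using z0 z1 by (simp add: u_def q_def field_simps)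
  then have "(1 - 1 / z) powr of_rat a * (1 + 1 / z) powr of_rat b
      = u powr (of_rat a + of_rat b) * q powr of_rat b"
    using Re_u Re_q by (simp add: powr_mult_Re_pos powr_add u_def)
  also have "\<dots> = u powi \<lfloor>a + b\<rfloor> * q powr of_rat b"
    using complex_powr_of_int[of u] u0 by (simp add: of_rat_add_eq_of_int_floor[OF ab])
  finally have "halfBranchPow a b z = (z * u / 2) powi \<lfloor>a + b\<rfloor> * q powr of_rat b"
    by (simp add: halfBranchPow_def branchPow_def power_int_minus power_int_mult_distrib
        power_int_divide_distrib field_simps u_def)
  also have "z * u / 2 = (z - 1) / 2" using z0 by (simp add: u_def field_simps)
  finally show ?thesis by (simp add: q_def)
qed

lemma jacobiJ_eq_power_mult_sum_reversed:
  assumes "z \<noteq> 1"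
  shows "jacobiJ N \<alpha> \<beta> z = ((z - 1) / 2) ^ N * (\<Sum>k\<le>N. jacobi_coeff N \<alpha> \<beta> (N - k) * (2 / (z - 1)) ^ k)"
proof -
  have "jacobiJ N \<alpha> \<beta> z = (\<Sum>k\<le>N. jacobi_coeff N \<alpha> \<beta> (N - k) * ((z - 1) / 2) ^ (N - k))"
    unfolding jacobiJ_eq_sum_coeff atMost_atLeast0
    using sum.atLeastAtMost_rev[of "\<lambda>j. jacobi_coeff N \<alpha> \<beta> j * ((z - 1) / 2) ^ j" 0 N] by simp
  also have "\<dots> = (\<Sum>k\<le>N. ((z - 1) / 2) ^ N * (jacobi_coeff N \<alpha> \<beta> (N - k) * (2 / (z - 1)) ^ k))"
    using assms by (intro sum.cong refl) (simp add: power_diff power_divide field_simps)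
  finally show ?thesis by (simp add: sum_distrib_left)
qed

lemma jacobiJ_eq_power_mult_sum_weight:
  assumes "z \<noteq> 1"
  shows "jacobiJ n \<alpha> \<beta> z = ((z - 1) / 2) ^ n * (\<Sum>j\<le>n. jacobi_weight n \<alpha> \<beta> j * (1 + 2 / (z - 1)) ^ (n - j))"
proof -
  have "((z - 1) / 2) ^ j * ((z + 1) / 2) ^ (n - j) = ((z - 1) / 2) ^ n * (1 + 2 / (z - 1)) ^ (n - j)"
    if "j \<le> n" for j
  proof -
    have "(z + 1) / 2 = (z - 1) / 2 * (1 + 2 / (z - 1))" using assms by (simp add: field_simps)
    then have "((z - 1) / 2) ^ j * ((z + 1) / 2) ^ (n - j)
        = ((z - 1) / 2) ^ (j + (n - j)) * (1 + 2 / (z - 1)) ^ (n - j)"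
      by (simp only: power_mult_distrib power_add mult.assoc)
    then show ?thesis using that by simp
  qed
  then show ?thesis
    unfolding jacobiJ_eq_sum_weight sum_distrib_left
    by (intro sum.cong refl) (simp add: mult_ac)
qed

lemma halfBranchPow_mult_jacobiJ_diff_eq:
  fixes a b :: rat and n M :: nat and z :: complex
  assumes ab: "a + b \<in> \<int>" and M: "int M = int n + \<lfloor>a + b\<rfloor>" and z: "norm z > 3"
  shows "halfBranchPow a b z * jacobiJ n (of_rat a) (of_rat b) z - jacobiJ M (- of_rat a) (- of_rat b) z
       = ((z - 1) / 2) ^ M * jacobi_defect n M (of_rat a) (of_rat b) (2 / (z - 1))"
proof -
  define t where "t = (z - 1) / 2"
  define q where "q = 1 + 2 / (z - 1)"
  have z1: "z \<noteq> 1" using z by auto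
  have "z + 1 \<noteq> 0"
  proof
    assume "z + 1 = 0"
    then have "z = -1" by (simp add: eq_neg_iff_add_eq_0)
    with z show False by simp
  qed
  with z1 have t0: "t \<noteq> 0" and q0: "q \<noteq> 0" by (auto simp: t_def q_def field_simps)
  have powers: "t powi \<lfloor>a + b\<rfloor> * t ^ n = t ^ M"
    using t0 by (simp add: power_int_add[symmetric] M add.commute flip: power_int_of_nat)
  have summand: "q powr of_rat b * (jacobi_weight n (of_rat a) (of_rat b) j * q ^ (n - j))
      = jacobi_weight n (of_rat a) (of_rat b) j * q powr (of_rat b + of_nat (n - j))" for j
    by (simp only: powr_add powr_nat'[OF disjI1[OF q0]] mult_ac)
  have "halfBranchPow a b z * jacobiJ n (of_rat a) (of_rat b) z
      = (t powi \<lfloor>a + b\<rfloor> * t ^ n)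
        * (q powr of_rat b * (\<Sum>j\<le>n. jacobi_weight n (of_rat a) (of_rat b) j * q ^ (n - j)))"
    unfolding halfBranchPow_eq[OF ab z] jacobiJ_eq_power_mult_sum_weight[OF z1] t_def q_def
    by (simp only: mult_ac)
  also have "\<dots> = t ^ M * (\<Sum>j\<le>n. jacobi_weight n (of_rat a) (of_rat b) j * q powr (of_rat b + of_nat (n - j)))"
    unfolding powers sum_distrib_left summand ..
  finally have "halfBranchPow a b z * jacobiJ n (of_rat a) (of_rat b) z
      = t ^ M * (\<Sum>j\<le>n. jacobi_weight n (of_rat a) (of_rat b) j * q powr (of_rat b + of_nat (n - j)))" .
  then show ?thesis
    by (simp add: jacobiJ_eq_power_mult_sum_reversed[OF z1] jacobi_defect_def t_def q_def right_diff_distrib)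
qed

lemma bigo_at_infinity_divide_diff:
  fixes c a :: "'a :: real_normed_field"
  shows "(\<lambda>z. c / (z - a)) \<in> O[at_infinity](\<lambda>z. inverse z)"
proof (rule bigoI[where c = "2 * norm c"])
  have "eventually (\<lambda>z. norm z \<ge> 2 * norm a + 1) (at_infinity :: 'a filter)"
    by (auto simp: eventually_at_infinity)
  then show "eventually (\<lambda>z. norm (c / (z - a)) \<le> 2 * norm c * norm (inverse z)) at_infinity"
  proof eventually_elim
    case (elim z)
    have "norm a \<ge> 0" by simp
    then have pos: "norm z > 0" and half: "norm z / 2 \<le> norm (z - a)"
      using elim norm_triangle_ineq2[of z a] by linarith+
    have "norm (c / (z - a)) = norm c / norm (z - a)" by (simp add: norm_divide)
    also have "\<dots> \<le> norm c / (norm z / 2)"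
      using pos half by (intro divide_left_mono mult_pos_pos) auto
    also have "\<dots> = 2 * norm c * norm (inverse z)" by (simp add: norm_inverse norm_divide field_simps)
    finally show ?case .
  qed
qed

lemma filterlim_divide_diff_at_infinity:
  fixes c a :: "'a :: real_normed_field"
  assumes "c \<noteq> 0"
  shows "filterlim (\<lambda>z. c / (z - a)) (at 0) at_infinity"
proof (rule filterlim_atI)
  have "filterlim (\<lambda>z. z - a) at_infinity at_infinity"
    unfolding diff_conv_add_uminus
    by (rule tendsto_add_filterlim_at_infinity'[OF filterlim_ident tendsto_const])
  then show "((\<lambda>z. c / (z - a)) \<longlongrightarrow> 0) at_infinity"
    by (rule tendsto_divide_0[OF tendsto_const])
  have "eventually (\<lambda>z. norm z \<ge> norm a + 1) (at_infinity :: 'a filter)"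
    by (auto simp: eventually_at_infinity)
  then show "eventually (\<lambda>z. c / (z - a) \<noteq> 0) at_infinity"
    by eventually_elim (use assms in auto)
qed

lemma power_mult_jacobi_defect_bigo:
  assumes "of_nat M = of_nat n + \<alpha> + \<beta>"
  shows "(\<lambda>z. ((z - 1) / 2) ^ M * jacobi_defect n M \<alpha> \<beta> (2 / (z - 1)))
         \<in> O[at_infinity](\<lambda>z. z powi (- (int n + 1)))"
proof -
  define w :: "complex \<Rightarrow> complex" where "w z = 2 / (z - 1)" for z
  have "filterlim w (at 0) at_infinity"
    unfolding w_def by (rule filterlim_divide_diff_at_infinity) simp
  then have "(\<lambda>z. jacobi_defect n M \<alpha> \<beta> (w z)) \<in> O[at_infinity](\<lambda>z. w z ^ (M + n + 1))"
    by (rule landau_o.big.compose[OF jacobi_defect_bigo[OF assms]])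
  then have "(\<lambda>z. ((z - 1) / 2) ^ M * jacobi_defect n M \<alpha> \<beta> (w z))
      \<in> O[at_infinity](\<lambda>z. ((z - 1) / 2) ^ M * w z ^ (M + n + 1))"
    by (rule landau_o.big.mult_left)
  also have "(\<lambda>z. ((z - 1) / 2) ^ M * w z ^ (M + n + 1)) = (\<lambda>z. w z ^ (n + 1))"
  proof
    fix z :: complex
    have "((z - 1) / 2) ^ M * w z ^ (M + n + 1) = ((z - 1) / 2 * w z) ^ M * w z ^ (n + 1)"
      by (simp only: add.assoc[of M n 1] power_add power_mult_distrib mult.assoc)
    moreover have "(z - 1) / 2 * w z = 1 \<or> w z = 0" by (cases "z = 1") (simp_all add: w_def)
    ultimately show "((z - 1) / 2) ^ M * w z ^ (M + n + 1) = w z ^ (n + 1)" by auto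
  qed
  also have "(\<lambda>z. w z ^ (n + 1)) \<in> O[at_infinity](\<lambda>z. inverse z ^ (n + 1))"
    unfolding w_def by (intro landau_o.big_power bigo_at_infinity_divide_diff)
  also have "(\<lambda>z. inverse z ^ (n + 1)) = (\<lambda>z :: complex. z powi (- (int n + 1)))"
  proof
    fix z :: complex
    have "- (int n + 1) = - int (n + 1)" by simp
    then show "inverse z ^ (n + 1) = z powi (- (int n + 1))"
      by (simp only: power_int_minus power_int_of_nat power_inverse)
  qed
  finally show ?thesis by (simp only: w_def)
qed

theorem mainTheorem3:
  fixes a b :: rat and n :: nat
  assumes "a + b \<in> \<int>"
    and "of_nat n \<ge> - (a + b)"
  shows "(\<lambda>z. halfBranchPow a b z * jacobiJ n (of_rat a) (of_rat b) z
              - jacobiJ (nat (int n + \<lfloor>a + b\<rfloor>)) (- of_rat a) (- of_rat b) z)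
         \<in> O[at_infinity](\<lambda>z. z powi (- (int n + 1)))"
proof -
  define M where "M = nat (int n + \<lfloor>a + b\<rfloor>)"
  have "a + b = of_int \<lfloor>a + b\<rfloor>"
    using of_rat_add_eq_of_int_floor[OF assms(1), where 'a = rat] by simp
  then have "(0 :: rat) \<le> of_int (int n + \<lfloor>a + b\<rfloor>)" using assms(2) by simp
  then have M: "int M = int n + \<lfloor>a + b\<rfloor>" by (simp add: M_def)
  have "(of_nat M :: complex) = of_int (int n + \<lfloor>a + b\<rfloor>)" by (simp flip: M)
  also have "\<dots> = of_nat n + of_rat a + of_rat b"
    by (simp add: of_rat_add_eq_of_int_floor[OF assms(1)] add.assoc)
  finally have bigo: "(\<lambda>z. ((z - 1) / 2) ^ M * jacobi_defect n M (of_rat a) (of_rat b) (2 / (z - 1)))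
      \<in> O[at_infinity](\<lambda>z. z powi (- (int n + 1)))"
    by (rule power_mult_jacobi_defect_bigo)
  have "eventually (\<lambda>z :: complex. norm z > 3) at_infinity"
    unfolding eventually_at_infinity by (rule exI[of _ 4]) auto
  then have "eventually (\<lambda>z. halfBranchPow a b z * jacobiJ n (of_rat a) (of_rat b) z
        - jacobiJ M (- of_rat a) (- of_rat b) z
      = ((z - 1) / 2) ^ M * jacobi_defect n M (of_rat a) (of_rat b) (2 / (z - 1))) at_infinity"
    by eventually_elim (rule halfBranchPow_mult_jacobiJ_diff_eq[OF assms(1) M])
  with bigo show ?thesis
    unfolding M_def by (subst landau_o.big.in_cong)
qed

end
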